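(* Let $(X,E)$ be a locally finite reflexive directed graph, let $R$ be a commutative $\mathbb{Q}$-algebra, and let $(X,\le)$ be the associated locally finite poset ($x\le y$ iff $x=y$ or there is a walk from $x$ to $y$). The adjacency map $\xi[x,y]=|E(x,y)|$ ($x\le y$) is invertible in the incidence algebra $[\mathbb{I}_{(X,\le)},R]$, and its inverse $\mu$ satisfies $\mu[x,x]=1/|E(x,x)|$ and, for $x\ne y$ with $x\le y$, $$\mu[x,y]=\sum_{\gamma\in W(x,y)}\frac{(-1)^{l(\gamma)}}{|E(v_0,v_0)|\,|E(v_1,v_1)|\cdots|E(v_{l(\gamma)},v_{l(\gamma)})|},$$ where for $\gamma=(\gamma_1,\dots,\gamma_n)$ we set $v_0=s(\gamma_1)$ and $v_i=t(\gamma_i)$ for $1\le i\le n$.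
   Context: A directed graph $(X,E)$ has a map $(s,t):E\to X\times X$, $E(x,y)$ the edges from $x$ to $y$; reflexive means $E(x,x)\ne\emptyset$ for all $x$. A walk of length $l(\gamma)=n\ge1$ is $(\gamma_1,\dots,\gamma_n)\in E^n$ with $t(\gamma_i)=s(\gamma_{i+1})$ and $s(\gamma_i)\ne t(\gamma_i)$; $W(x,y)$ is the set of walks from $x$ to $y$. Locally finite means $E(x,x)$ and $W(x,y)$ finite for all $x,y$. For a locally finite poset, $\mathbb{I}_{(X,\le)}$ is the set of intervals $[x,y]$ ($x\le y$), and the incidence algebra $[\mathbb{I}_{(X,\le)},R]$ has product $(f\star g)[x,z]=\sum_{x\le y\le z}f[x,y]g[y,z]$ and unit $\epsilon[x,y]=\delta_{x,y}$. *)

theory Defs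
  imports Main
begin

text \<open>A directed (multi)graph with vertex type 'x and edge type 'e, given by
  source and target maps s t.\<close>

definition edges :: "('e \<Rightarrow> 'x) \<Rightarrow> ('e \<Rightarrow> 'x) \<Rightarrow> 'x \<Rightarrow> 'x \<Rightarrow> 'e set" where
  "edges s t x y = {e. s e = x \<and> t e = y}"

definition is_walk :: "('e \<Rightarrow> 'x) \<Rightarrow> ('e \<Rightarrow> 'x) \<Rightarrow> 'e list \<Rightarrow> bool" where
  "is_walk s t \<gamma> \<longleftrightarrow> \<gamma> \<noteq> [] \<and> (\<forall>i<length \<gamma>. s (\<gamma> ! i) \<noteq> t (\<gamma> ! i))
     \<and> (\<forall>i. Suc i < length \<gamma> \<longrightarrow> t (\<gamma> ! i) = s (\<gamma> ! Suc i))"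

definition walks :: "('e \<Rightarrow> 'x) \<Rightarrow> ('e \<Rightarrow> 'x) \<Rightarrow> 'x \<Rightarrow> 'x \<Rightarrow> 'e list set" where
  "walks s t x y = {\<gamma>. is_walk s t \<gamma> \<and> s (hd \<gamma>) = x \<and> t (last \<gamma>) = y}"

definition reflexive_graph :: "('e \<Rightarrow> 'x) \<Rightarrow> ('e \<Rightarrow> 'x) \<Rightarrow> bool" where
  "reflexive_graph s t \<longleftrightarrow> (\<forall>x. edges s t x x \<noteq> {})"

definition locally_finite_graph :: "('e \<Rightarrow> 'x) \<Rightarrow> ('e \<Rightarrow> 'x) \<Rightarrow> bool" where
  "locally_finite_graph s t \<longleftrightarrow> (\<forall>x. finite (edges s t x x)) \<and> (\<forall>x y. finite (walks s t x y))"

definition walk_le :: "('e \<Rightarrow> 'x) \<Rightarrow> ('e \<Rightarrow> 'x) \<Rightarrow> 'x \<Rightarrow> 'x \<Rightarrow> bool" where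
  "walk_le s t x y \<longleftrightarrow> x = y \<or> walks s t x y \<noteq> {}"

text \<open>Incidence algebra over the order le with values in 'r: elements are functions
  f x y, only the values on intervals (le x y) matter.\<close>
definition conv :: "('x \<Rightarrow> 'x \<Rightarrow> bool) \<Rightarrow> ('x \<Rightarrow> 'x \<Rightarrow> 'r::comm_ring_1) \<Rightarrow> ('x \<Rightarrow> 'x \<Rightarrow> 'r) \<Rightarrow> 'x \<Rightarrow> 'x \<Rightarrow> 'r" where
  "conv le f g x z = (\<Sum>y\<in>{y. le x y \<and> le y z}. f x y * g y z)"

definition inc_unit :: "'x \<Rightarrow> 'x \<Rightarrow> 'r::comm_ring_1" where
  "inc_unit x y = (if x = y then 1 else 0)"

definition inc_inverse :: "('x \<Rightarrow> 'x \<Rightarrow> bool) \<Rightarrow> ('x \<Rightarrow> 'x \<Rightarrow> 'r::comm_ring_1) \<Rightarrow> ('x \<Rightarrow> 'x \<Rightarrow> 'r) \<Rightarrow> bool" where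
  "inc_inverse le f g \<longleftrightarrow> (\<forall>x z. le x z \<longrightarrow> conv le f g x z = inc_unit x z \<and> conv le g f x z = inc_unit x z)"

definition inc_invertible :: "('x \<Rightarrow> 'x \<Rightarrow> bool) \<Rightarrow> ('x \<Rightarrow> 'x \<Rightarrow> 'r::comm_ring_1) \<Rightarrow> bool" where
  "inc_invertible le f \<longleftrightarrow> (\<exists>g. inc_inverse le f g)"

text \<open>A commutative ring is a Q-algebra iff every positive integer is invertible.\<close>
definition Q_algebra :: "'r::comm_ring_1 itself \<Rightarrow> bool" where
  "Q_algebra _ \<longleftrightarrow> (\<forall>n::nat. n > 0 \<longrightarrow> (\<exists>y::'r. of_nat n * y = 1))"

definition nat_inv :: "nat \<Rightarrow> 'r::comm_ring_1" where
  "nat_inv n = (THE y. of_nat n * y = 1)"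

end

theory Submission
  imports Defs
begin

(* A walk never uses loops, and local finiteness forbids closed walks (a closed walk
   could be repeated to give arbitrarily long closed walks), so "x \<le> y iff there is a walk
   from x to y" is a partial order with finite intervals.  Let nu[x,z] be the signed sum over
   walks from x to z (the empty walk when x = z) of the products of 1/|E(v,v)| over the
   vertices v of the walk.  Splitting off the first edge of a walk gives the recursion
     nu[x,z] = -(1/|E(x,x)|) * sum_{x < y <= z} |E(x,y)| nu[y,z]     (x <> z),
   which says exactly that nu is a right inverse of xi.  Applied to the reversed graph
   (swap sources and targets), the same statement yields a left inverse of xi.  In any
   incidence algebra a left and a right inverse coincide, so nu is the unique inverse, and
   its values are the ones claimed. *)

(* A relation that is reflexive, transitive and has finite intervals: enough for the
   convolution of the incidence algebra to be associative with unit inc_unit. *)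
locale incidence_order =
  fixes le :: "'x \<Rightarrow> 'x \<Rightarrow> bool"
  assumes reflexive: "le x x"
    and transitive: "le x y \<Longrightarrow> le y z \<Longrightarrow> le x z"
    and finite_interval: "finite {y. le x y \<and> le y z}"
begin

lemma conv_unit_right:
  assumes "le x z"
  shows "conv le f inc_unit x z = (f x z :: 'r::comm_ring_1)"
proof -
  have "conv le f inc_unit x z = (\<Sum>y\<in>{y. le x y \<and> le y z}. if y = z then f x y else 0)"
    unfolding conv_def by (rule sum.cong) (auto simp: inc_unit_def)
  also have "\<dots> = f x z" using finite_interval assms reflexive by simp
  finally show ?thesis .
qed

lemma conv_unit_left:
  assumes "le x z"
  shows "conv le inc_unit f x z = (f x z :: 'r::comm_ring_1)"
proof -
  have "conv le inc_unit f x z = (\<Sum>y\<in>{y. le x y \<and> le y z}. if x = y then f y z else 0)"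
    unfolding conv_def by (rule sum.cong) (auto simp: inc_unit_def)
  also have "\<dots> = f x z" using finite_interval assms reflexive by simp
  finally show ?thesis .
qed

(* Associativity: both sides sum f x u * g u y * h y z over chains x \<le> u \<le> y \<le> z. *)
lemma conv_assoc:
  fixes f g h :: "'x \<Rightarrow> 'x \<Rightarrow> 'r::comm_ring_1"
  shows "conv le (conv le f g) h x z = conv le f (conv le g h) x z"
proof -
  define J where "J = {y. le x y \<and> le y z}"
  have J: "finite J" unfolding J_def by (rule finite_interval)
  have "conv le (conv le f g) h x z = (\<Sum>y\<in>J. conv le f g x y * h y z)"
    unfolding conv_def[of le "conv le f g"] J_def ..
  also have "\<dots> = (\<Sum>y\<in>J. \<Sum>u\<in>{u. u \<in> J \<and> le u y}. f x u * g u y * h y z)"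
  proof (rule sum.cong[OF refl])
    fix y assume "y \<in> J"
    then have "{u. u \<in> J \<and> le u y} = {u. le x u \<and> le u y}" unfolding J_def using transitive by blast
    then show "conv le f g x y * h y z = (\<Sum>u\<in>{u. u \<in> J \<and> le u y}. f x u * g u y * h y z)"
      unfolding conv_def by (simp add: sum_distrib_right)
  qed
  also have "\<dots> = (\<Sum>u\<in>J. \<Sum>y\<in>{y. y \<in> J \<and> le u y}. f x u * g u y * h y z)"
    by (rule sum.swap_restrict[OF J J, symmetric])
  also have "\<dots> = (\<Sum>u\<in>J. f x u * conv le g h u z)"
  proof (rule sum.cong[OF refl])
    fix u assume "u \<in> J"
    then have "{y. y \<in> J \<and> le u y} = {y. le u y \<and> le y z}" unfolding J_def using transitive by blast
    then show "(\<Sum>y\<in>{y. y \<in> J \<and> le u y}. f x u * g u y * h y z) = f x u * conv le g h u z"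
      unfolding conv_def by (simp add: sum_distrib_left mult.assoc)
  qed
  also have "\<dots> = conv le f (conv le g h) x z"
    unfolding conv_def[of le f] J_def ..
  finally show ?thesis .
qed

(* A left inverse and a right inverse agree on every interval:
   mu = mu * (f * nu) = (mu * f) * nu = nu. *)
lemma left_inverse_eq_right_inverse:
  assumes left: "\<And>a b. le a b \<Longrightarrow> conv le \<mu> f a b = inc_unit a b"
    and right: "\<And>a b. le a b \<Longrightarrow> conv le f \<nu> a b = inc_unit a b"
    and "le x z"
  shows "\<mu> x z = (\<nu> x z :: 'r::comm_ring_1)"
proof -
  have "\<mu> x z = conv le \<mu> inc_unit x z" using conv_unit_right[OF \<open>le x z\<close>, of \<mu>] by simp
  also have "\<dots> = conv le \<mu> (conv le f \<nu>) x z"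
    unfolding conv_def[of le \<mu>] by (rule sum.cong) (simp_all add: right)
  also have "\<dots> = conv le (conv le \<mu> f) \<nu> x z" by (rule conv_assoc[symmetric])
  also have "\<dots> = conv le inc_unit \<nu> x z"
    unfolding conv_def[of le _ \<nu>] by (rule sum.cong) (simp_all add: left)
  also have "\<dots> = \<nu> x z" using conv_unit_left[OF \<open>le x z\<close>] .
  finally show ?thesis .
qed

lemma right_inverse_is_inverse:
  assumes left: "\<And>a b. le a b \<Longrightarrow> conv le \<mu> f a b = inc_unit a b"
    and right: "\<And>a b. le a b \<Longrightarrow> conv le f \<nu> a b = (inc_unit a b :: 'r::comm_ring_1)"
  shows "inc_inverse le f \<nu>"
  unfolding inc_inverse_def
proof (intro allI impI conjI)
  fix x z assume "le x z"
  then show "conv le f \<nu> x z = inc_unit x z" by (rule right)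
  have "conv le \<nu> f x z = conv le \<mu> f x z"
    unfolding conv_def
    by (rule sum.cong) (simp_all add: left_inverse_eq_right_inverse[OF left right])
  then show "conv le \<nu> f x z = inc_unit x z" using left[OF \<open>le x z\<close>] by simp
qed

end

(* Convolution over the opposite relation is convolution of the transposed maps, in
   reverse order (this uses commutativity of the coefficients). *)
lemma conv_transpose:
  fixes f g :: "'x \<Rightarrow> 'x \<Rightarrow> 'r::comm_ring_1"
  shows "conv (\<lambda>a b. le b a) f g z x = conv le (\<lambda>a b. g b a) (\<lambda>a b. f b a) x z"
  unfolding conv_def by (simp add: conj_commute mult.commute)

lemma not_is_walk_Nil [simp]: "\<not> is_walk s t []"
  by (simp add: is_walk_def)

lemma is_walk_Cons:
  "is_walk s t (e # \<gamma>) \<longleftrightarrow> s e \<noteq> t e \<and> (\<gamma> = [] \<or> is_walk s t \<gamma> \<and> t e = s (hd \<gamma>))"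
proof (cases \<gamma>)
  case (Cons a l)
  show ?thesis
    unfolding is_walk_def Cons
    apply (simp only: length_Cons All_less_Suc2 nth_Cons_0 nth_Cons_Suc)
    apply (auto simp: hd_conv_nth)
    subgoal for i by (cases i) auto
    done
qed (simp add: is_walk_def)

lemma is_walk_append:
  "\<gamma> \<noteq> [] \<Longrightarrow> \<delta> \<noteq> [] \<Longrightarrow>
   is_walk s t (\<gamma> @ \<delta>) \<longleftrightarrow> is_walk s t \<gamma> \<and> is_walk s t \<delta> \<and> t (last \<gamma>) = s (hd \<delta>)"
  by (induction \<gamma> rule: list_nonempty_induct) (auto simp: is_walk_Cons)

lemma is_walk_snoc:
  "is_walk s t (\<gamma> @ [e]) \<longleftrightarrow> s e \<noteq> t e \<and> (\<gamma> = [] \<or> is_walk s t \<gamma> \<and> t (last \<gamma>) = s e)"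
  by (cases "\<gamma> = []") (auto simp: is_walk_append is_walk_Cons)

lemma is_walk_rev: "is_walk t s (rev \<gamma>) \<longleftrightarrow> is_walk s t \<gamma>"
  by (induction \<gamma>) (auto simp: is_walk_snoc is_walk_Cons last_rev)

lemma walks_nonempty: "\<gamma> \<in> walks s t x y \<Longrightarrow> \<gamma> \<noteq> []"
  unfolding walks_def is_walk_def by auto

lemma Cons_in_walks:
  "e # \<gamma> \<in> walks s t x z \<longleftrightarrow>
     s e = x \<and> s e \<noteq> t e \<and> (\<gamma> = [] \<and> t e = z \<or> \<gamma> \<in> walks s t (t e) z)"
  unfolding walks_def by (auto simp: is_walk_Cons)

lemma walks_append:
  assumes "\<gamma> \<in> walks s t x y" and "\<delta> \<in> walks s t y z"
  shows "\<gamma> @ \<delta> \<in> walks s t x z"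
proof -
  have "\<gamma> \<noteq> []" "\<delta> \<noteq> []" using assms by (auto dest: walks_nonempty)
  then show ?thesis using assms unfolding walks_def by (simp add: is_walk_append)
qed

lemma walks_swap: "walks t s x y = rev ` walks s t y x"
proof -
  have swap: "\<delta> \<in> walks t s x y \<longleftrightarrow> rev \<delta> \<in> walks s t y x" for \<delta>
    unfolding walks_def by (cases "\<delta> = []") (auto simp: is_walk_rev hd_rev last_rev)
  show ?thesis
  proof (intro set_eqI iffI)
    fix \<delta> assume "\<delta> \<in> walks t s x y"
    then show "\<delta> \<in> rev ` walks s t y x" using swap by (intro image_eqI[of _ _ "rev \<delta>"]) auto
  next
    fix \<delta> assume "\<delta> \<in> rev ` walks s t y x"
    then obtain \<gamma> where "\<gamma> \<in> walks s t y x" and "\<delta> = rev \<gamma>" by blast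
    then show "\<delta> \<in> walks t s x y" using swap[of \<delta>] by simp
  qed
qed

lemma edges_swap: "edges t s x y = edges s t y x"
  unfolding edges_def by auto

lemma walk_le_swap: "walk_le t s x y = walk_le s t y x"
  unfolding walk_le_def walks_swap[of t s x y] by auto


lemma nat_inv_right_inverse:
  assumes "Q_algebra TYPE('r::comm_ring_1)" and "n > 0"
  shows "of_nat n * (nat_inv n :: 'r) = 1"
proof -
  obtain y :: 'r where y: "of_nat n * y = 1" using assms unfolding Q_algebra_def by blast
  have "of_nat n * (THE y :: 'r. of_nat n * y = 1) = 1"
  proof (rule theI[of _ y])
    show "of_nat n * y = 1" by fact
    fix z :: 'r assume z: "of_nat n * z = 1"
    have "z = z * (of_nat n * y)" using y by simp
    also have "\<dots> = y" using z by (simp add: ac_simps)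
    finally show "z = y" .
  qed
  then show ?thesis unfolding nat_inv_def .
qed

locale lf_reflexive_graph =
  fixes s t :: "'e \<Rightarrow> 'x"
  assumes loops_exist: "reflexive_graph s t"
    and locally_finite: "locally_finite_graph s t"
begin

abbreviation "W \<equiv> walks s t"
abbreviation "E \<equiv> edges s t"
abbreviation "le \<equiv> walk_le s t"

lemma finite_walks: "finite (W x y)"
  using locally_finite unfolding locally_finite_graph_def by auto

(* Repeating a closed walk gives arbitrarily long closed walks ... *)
lemma closed_walks_unbounded:
  assumes "\<gamma> \<in> W x x"
  shows "\<exists>\<delta>\<in>W x x. n \<le> length \<delta>"
proof (induction n)
  case (Suc n)
  then obtain \<delta> where "\<delta> \<in> W x x" "n \<le> length \<delta>" by auto
  moreover have "\<gamma> \<noteq> []" using assms by (rule walks_nonempty)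
  ultimately have "\<delta> @ \<gamma> \<in> W x x" "Suc n \<le> length (\<delta> @ \<gamma>)"
    using walks_append[OF _ assms] by (auto simp: neq_Nil_conv)
  then show ?case by blast
qed (use assms in auto)

(* ... so local finiteness rules out closed walks altogether. *)
lemma no_closed_walks: "W x x = {}"
proof (rule ccontr)
  assume "W x x \<noteq> {}"
  then obtain \<gamma> where "\<gamma> \<in> W x x" by auto
  then obtain \<delta> where \<delta>: "\<delta> \<in> W x x" "Suc (Max (length ` W x x)) \<le> length \<delta>"
    using closed_walks_unbounded by blast
  then have "length \<delta> \<le> Max (length ` W x x)" using finite_walks by simp
  with \<delta>(2) show False by simp
qed

lemma walk_le_antisym:
  assumes "le x y" and "le y x"
  shows "x = y"
proof (rule ccontr)
  assume "x \<noteq> y"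
  then obtain \<gamma> \<delta> where "\<gamma> \<in> W x y" "\<delta> \<in> W y x" using assms unfolding walk_le_def by auto
  then have "\<gamma> @ \<delta> \<in> W x x" by (rule walks_append)
  then show False by (simp add: no_closed_walks)
qed

(* Every vertex of an interval [x,z] other than x lies on a walk from x to z, so intervals
   are finite. *)
lemma finite_walk_interval: "finite {y. le x y \<and> le y z}"
proof (rule finite_subset)
  show "{y. le x y \<and> le y z} \<subseteq> {x, z} \<union> (\<Union>\<gamma>\<in>W x z. t ` set \<gamma>)"
  proof
    fix y assume y: "y \<in> {y. le x y \<and> le y z}"
    show "y \<in> {x, z} \<union> (\<Union>\<gamma>\<in>W x z. t ` set \<gamma>)"
    proof (cases "y = x \<or> y = z")
      case False
      then obtain \<gamma> \<delta> where \<gamma>\<delta>: "\<gamma> \<in> W x y" "\<delta> \<in> W y z" using y unfolding walk_le_def by auto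
      then have "\<gamma> @ \<delta> \<in> W x z" by (rule walks_append)
      moreover have "y \<in> t ` set (\<gamma> @ \<delta>)"
        using \<gamma>\<delta>(1) walks_nonempty[OF \<gamma>\<delta>(1)] unfolding walks_def by auto
      ultimately show ?thesis by blast
    qed auto
  qed
  show "finite ({x, z} \<union> (\<Union>\<gamma>\<in>W x z. t ` set \<gamma>))" by (simp add: finite_walks)
qed

sublocale incidence_order le
proof
  show "le x x" for x by (simp add: walk_le_def)
  show "le x z" if xy: "le x y" and yz: "le y z" for x y z
  proof (cases "x = y \<or> y = z")
    case False
    then obtain \<gamma> \<delta> where "\<gamma> \<in> W x y" "\<delta> \<in> W y z" using xy yz unfolding walk_le_def by auto
    then have "\<gamma> @ \<delta> \<in> W x z" by (rule walks_append)
    then show ?thesis unfolding walk_le_def by blast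
  qed (use xy yz in auto)
  show "finite {y. le x y \<and> le y z}" for x z by (rule finite_walk_interval)
qed

(* Loop sets are finite by assumption; other edge sets inject into the finite walk sets. *)
lemma finite_edges: "finite (E x y)"
proof (cases "x = y")
  case True then show ?thesis using locally_finite unfolding locally_finite_graph_def by auto
next
  case False
  have "(\<lambda>e. [e]) ` E x y \<subseteq> W x y"
    using False unfolding walks_def edges_def is_walk_def by auto
  then have "finite ((\<lambda>e. [e]) ` E x y)" using finite_walks by (rule finite_subset)
  then show ?thesis by (rule finite_imageD) (simp add: inj_on_def)
qed

lemma loops_card_pos: "0 < card (E x x)"
  using loops_exist finite_edges unfolding reflexive_graph_def by (simp add: card_gt_0_iff)

lemma dual: "lf_reflexive_graph t s"
proof
  show "reflexive_graph t s" using loops_exist unfolding reflexive_graph_def edges_swap[of t s] .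
  show "locally_finite_graph t s"
    using finite_edges finite_walks unfolding locally_finite_graph_def edges_swap[of t s] walks_swap[of t s]
    by simp
qed

definition paths :: "'x \<Rightarrow> 'x \<Rightarrow> 'e list set" where
  "paths x z = {\<gamma>. \<gamma> = [] \<and> x = z \<or> \<gamma> \<in> W x z}"

lemma Nil_in_paths: "[] \<in> paths x z \<longleftrightarrow> x = z"
  unfolding paths_def using walks_nonempty[of "[]" s t x z] by auto

lemma Cons_in_paths: "e # \<gamma> \<in> paths x z \<longleftrightarrow> s e = x \<and> s e \<noteq> t e \<and> \<gamma> \<in> paths (t e) z"
  unfolding paths_def by (auto simp: Cons_in_walks)

lemma paths_refl: "paths x x = {[]}"
  unfolding paths_def by (auto simp: no_closed_walks)

lemma paths_off_diagonal: "x \<noteq> z \<Longrightarrow> paths x z = W x z"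
  unfolding paths_def by auto

lemma finite_paths: "finite (paths x z)"
proof -
  have "paths x z \<subseteq> insert [] (W x z)" unfolding paths_def by auto
  then show ?thesis by (rule finite_subset) (simp add: finite_walks)
qed

lemma walk_le_iff_paths: "le x z \<longleftrightarrow> paths x z \<noteq> {}"
  unfolding walk_le_def paths_def by auto

lemma edge_walk_le: "le (s e) (t e)"
proof -
  have "[e] \<in> paths (s e) (t e)" if "s e \<noteq> t e" using that by (simp add: Cons_in_paths Nil_in_paths)
  then show ?thesis unfolding walk_le_iff_paths by (cases "s e = t e") (auto simp: paths_refl)
qed

definition first_steps :: "'x \<Rightarrow> 'x \<Rightarrow> 'e set" where
  "first_steps x z = {e. s e = x \<and> t e \<noteq> x \<and> le (t e) z}"

lemma paths_first_step:
  assumes "x \<noteq> z"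
  shows "paths x z = (\<lambda>(e, \<gamma>). e # \<gamma>) ` (SIGMA e:first_steps x z. paths (t e) z)"
proof (intro set_eqI iffI)
  fix \<gamma> assume \<gamma>: "\<gamma> \<in> paths x z"
  then obtain e \<delta> where "\<gamma> = e # \<delta>" using assms Nil_in_paths by (metis list.exhaust)
  with \<gamma> have "e \<in> first_steps x z" "\<delta> \<in> paths (t e) z"
    unfolding first_steps_def walk_le_iff_paths by (auto simp: Cons_in_paths)
  with \<open>\<gamma> = e # \<delta>\<close> show "\<gamma> \<in> (\<lambda>(e, \<gamma>). e # \<gamma>) ` (SIGMA e:first_steps x z. paths (t e) z)"
    by force
qed (auto simp: first_steps_def Cons_in_paths)

(* Every first step starts some path, so there are finitely many. *)
lemma finite_first_steps: "finite (first_steps x z)"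
proof (rule finite_subset)
  show "first_steps x z \<subseteq> hd ` paths x z"
  proof
    fix e assume e: "e \<in> first_steps x z"
    then obtain \<delta> where "\<delta> \<in> paths (t e) z" unfolding first_steps_def walk_le_iff_paths by auto
    with e have "e # \<delta> \<in> paths x z" unfolding first_steps_def by (auto simp: Cons_in_paths)
    then show "e \<in> hd ` paths x z" by force
  qed
  show "finite (hd ` paths x z)" using finite_paths by simp
qed

definition loop_inv :: "'x \<Rightarrow> 'r::comm_ring_1" where
  "loop_inv x = nat_inv (card (E x x))"

definition weight :: "'x \<Rightarrow> 'e list \<Rightarrow> 'r::comm_ring_1" where
  "weight x \<gamma> = (-1) ^ length \<gamma> * (loop_inv x * (\<Prod>i<length \<gamma>. loop_inv (t (\<gamma> ! i))))"

definition nu :: "'x \<Rightarrow> 'x \<Rightarrow> 'r::comm_ring_1" where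
  "nu x z = (\<Sum>\<gamma>\<in>paths x z. weight x \<gamma>)"

lemma weight_Cons: "weight x (e # \<gamma>) = - loop_inv x * (weight (t e) \<gamma> :: 'r::comm_ring_1)"
  unfolding weight_def length_Cons prod.lessThan_Suc_shift by simp

lemma nu_diagonal: "nu x x = loop_inv x"
  unfolding nu_def paths_refl by (simp add: weight_def)

lemma nu_off_diagonal:
  assumes "x \<noteq> z"
  shows "nu x z = (\<Sum>\<gamma>\<in>W x z. weight (s (hd \<gamma>)) \<gamma> :: 'r::comm_ring_1)"
  unfolding nu_def paths_off_diagonal[OF assms] by (rule sum.cong) (auto simp: walks_def)

lemma nu_first_step:
  assumes "x \<noteq> z"
  shows "nu x z = - loop_inv x * (\<Sum>e\<in>first_steps x z. nu (t e) z :: 'r::comm_ring_1)"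
proof -
  have "nu x z = (\<Sum>(e, \<gamma>)\<in>(SIGMA e:first_steps x z. paths (t e) z). weight x (e # \<gamma>) :: 'r)"
    unfolding nu_def paths_first_step[OF assms]
    by (subst sum.reindex) (auto simp: inj_on_def case_prod_beta)
  also have "\<dots> = (\<Sum>e\<in>first_steps x z. \<Sum>\<gamma>\<in>paths (t e) z. weight x (e # \<gamma>))"
    by (rule sum.Sigma[symmetric]) (simp_all add: finite_first_steps finite_paths)
  also have "\<dots> = - loop_inv x * (\<Sum>e\<in>first_steps x z. nu (t e) z)"
    by (simp add: weight_Cons nu_def sum_distrib_left)
  finally show ?thesis .
qed

(* Grouping the first steps by their target y turns a sum over edges into a sum over the
   interval weighted by the edge counts |E(x,y)|. *)
lemma sum_first_steps:
  "(\<Sum>e\<in>first_steps x z. g (t e)) =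
     (\<Sum>y\<in>{y. le x y \<and> le y z \<and> y \<noteq> x}. of_nat (card (E x y)) * (g y :: 'r::comm_ring_1))"
proof -
  let ?I = "{y. le x y \<and> le y z \<and> y \<noteq> x}"
  have edges_to: "{e \<in> first_steps x z. t e = y} = E x y" if "y \<in> ?I" for y
    using that unfolding first_steps_def edges_def by auto
  have "t ` first_steps x z \<subseteq> ?I"
  proof
    fix y assume "y \<in> t ` first_steps x z"
    then obtain e where "e \<in> first_steps x z" "y = t e" by blast
    then show "y \<in> ?I" using edge_walk_le[of e] unfolding first_steps_def by auto
  qed
  then have "(\<Sum>e\<in>first_steps x z. g (t e)) = (\<Sum>y\<in>?I. \<Sum>e\<in>{e \<in> first_steps x z. t e = y}. g (t e))"
    by (intro sum.group[symmetric] finite_first_steps finite_subset[OF _ finite_interval]) auto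
  also have "\<dots> = (\<Sum>y\<in>?I. of_nat (card (E x y)) * g y)"
    by (rule sum.cong) (auto simp: edges_to edges_def)
  finally show ?thesis .
qed

lemma loop_inv_inverse:
  assumes "Q_algebra TYPE('r::comm_ring_1)"
  shows "of_nat (card (E x x)) * (loop_inv x :: 'r) = 1"
  unfolding loop_inv_def using nat_inv_right_inverse[OF assms loops_card_pos] .

lemma interval_diagonal: "{y. le x y \<and> le y x} = {x}"
  using reflexive walk_le_antisym by auto

lemma interval_insert_bottom:
  "le x z \<Longrightarrow> {y. le x y \<and> le y z} = insert x {y. le x y \<and> le y z \<and> y \<noteq> x}"
  using reflexive by auto

(* nu is a right inverse of the adjacency map: on the diagonal |E(x,x)| / |E(x,x)| = 1, and
   off the diagonal the loop term cancels the rest by the first-edge recursion. *)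
lemma adjacency_right_inverse:
  assumes Q: "Q_algebra TYPE('r::comm_ring_1)" and "le x z"
  shows "conv le (\<lambda>a b. of_nat (card (E a b))) nu x z = (inc_unit x z :: 'r)"
proof (cases "x = z")
  case True
  show ?thesis
    unfolding True conv_def interval_diagonal using loop_inv_inverse[OF Q]
    by (simp add: nu_diagonal inc_unit_def)
next
  case False
  define S :: 'r where "S = (\<Sum>y\<in>{y. le x y \<and> le y z \<and> y \<noteq> x}. of_nat (card (E x y)) * nu y z)"
  have "nu x z = - loop_inv x * S"
    unfolding S_def nu_first_step[OF False] sum_first_steps[of "\<lambda>y. nu y z"] ..
  moreover have "conv le (\<lambda>a b. of_nat (card (E a b))) nu x z = of_nat (card (E x x)) * nu x z + S"
    unfolding conv_def interval_insert_bottom[OF \<open>le x z\<close>] S_def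
    by (subst sum.insert) (auto intro: finite_subset[OF _ finite_interval])
  ultimately show ?thesis
    using loop_inv_inverse[OF Q, of x] False by (simp add: inc_unit_def algebra_simps)
qed

end

(* By duality the transposed walk sums of the reversed graph form a left inverse, so nu is the
   two-sided inverse of the adjacency map. *)
lemma (in lf_reflexive_graph) adjacency_inverse:
  assumes Q: "Q_algebra TYPE('r::comm_ring_1)"
  shows "inc_inverse le (\<lambda>a b. of_nat (card (E a b)) :: 'r) nu"
proof (rule right_inverse_is_inverse)
  interpret dual: lf_reflexive_graph t s by (rule dual)
  have le_dual: "walk_le t s = (\<lambda>a b. le b a)" by (intro ext) (rule walk_le_swap)
  have adj_dual: "(\<lambda>a b. of_nat (card (edges t s b a)) :: 'r) = (\<lambda>a b. of_nat (card (E a b)))"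
    by (simp add: edges_swap[of t s])
  fix x z assume "le x z"
  have "(inc_unit x z :: 'r) = conv (walk_le t s) (\<lambda>a b. of_nat (card (edges t s a b))) dual.nu z x"
    using dual.adjacency_right_inverse[OF Q, of z x] \<open>le x z\<close>
    by (simp add: walk_le_swap[of t s] inc_unit_def)
  also have "\<dots> = conv le (\<lambda>a b. dual.nu b a) (\<lambda>a b. of_nat (card (edges t s b a))) x z"
    unfolding le_dual by (rule conv_transpose)
  finally show "conv le (\<lambda>a b. dual.nu b a) (\<lambda>a b. of_nat (card (E a b))) x z = (inc_unit x z :: 'r)"
    unfolding adj_dual by simp
next
  fix x z assume "le x z"
  then show "conv le (\<lambda>a b. of_nat (card (E a b))) nu x z = (inc_unit x z :: 'r)"
    by (rule adjacency_right_inverse[OF Q])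
qed

theorem theorem4p2:
  fixes s t :: "'e \<Rightarrow> 'x"
  assumes "reflexive_graph s t"
    and "locally_finite_graph s t"
    and "Q_algebra TYPE('r::comm_ring_1)"
  defines "xi \<equiv> (\<lambda>x y. of_nat (card (edges s t x y)) :: 'r)"
  shows "inc_invertible (walk_le s t) xi
    \<and> (\<forall>\<mu>. inc_inverse (walk_le s t) xi \<mu> \<longrightarrow>
         (\<forall>x. \<mu> x x = nat_inv (card (edges s t x x)))
       \<and> (\<forall>x y. x \<noteq> y \<and> walk_le s t x y \<longrightarrow>
            \<mu> x y = (\<Sum>\<gamma>\<in>walks s t x y. (-1) ^ length \<gamma> *
               (nat_inv (card (edges s t (s (hd \<gamma>)) (s (hd \<gamma>))))
                * (\<Prod>i<length \<gamma>. nat_inv (card (edges s t (t (\<gamma> ! i)) (t (\<gamma> ! i)))))))))"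
proof -
  interpret lf_reflexive_graph s t using assms(1,2) by unfold_locales
  have inverse: "inc_inverse le xi (nu :: 'x \<Rightarrow> 'x \<Rightarrow> 'r)"
    unfolding xi_def using adjacency_inverse[OF assms(3)] .
  have unique: "\<mu> x z = (nu x z :: 'r)" if "inc_inverse le xi \<mu>" and "le x z" for \<mu> x z
    using left_inverse_eq_right_inverse[of \<mu> xi nu] that inverse unfolding inc_inverse_def by blast
  show ?thesis
  proof (intro conjI allI impI)
    show "inc_invertible le xi" using inverse unfolding inc_invertible_def by blast
  next
    fix \<mu> x assume "inc_inverse le xi \<mu>"
    then have "\<mu> x x = nu x x" using reflexive by (rule unique)
    then show "\<mu> x x = nat_inv (card (E x x))" by (simp add: nu_diagonal loop_inv_def)
  next
    fix \<mu> x y assume "inc_inverse le xi \<mu>" and xy: "x \<noteq> y \<and> le x y"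
    then have "\<mu> x y = nu x y" by (intro unique) simp_all
    then show "\<mu> x y = (\<Sum>\<gamma>\<in>W x y. (-1) ^ length \<gamma> *
        (nat_inv (card (E (s (hd \<gamma>)) (s (hd \<gamma>)))) * (\<Prod>i<length \<gamma>. nat_inv (card (E (t (\<gamma> ! i)) (t (\<gamma> ! i)))))))"
      using xy by (simp add: nu_off_diagonal weight_def loop_inv_def)
  qed
qed

end
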